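(* Let $P$ be a finite semipure poset of length $n$ and $t\ge 1$ an integer. For a maximal chain $C=\{x_0<x_1<\dots<x_m\}$ of $P$ and $d=(d_1,\dots,d_m)\in\{0,1\}^m$, let $[C,d]$ be the set of maximal chains $\{\hat 0<(x_0,f_0)<(x_1,f_1)<\dots<(x_m,f_m)<\hat 1\}$ of $\widehat{P*T_{t,n}}$ with $r(f_i)-r(f_{i-1})=d_i$ for all $i\in[m]$. Then, as $C$ ranges over the maximal chains of $P$ (of any length $m$) and $d$ ranges over $\{0,1\}^m$, the sets $[C,d]$ partition the set of maximal chains of $\widehat{P*T_{t,n}}$, and $|[C,d]|=t^{\,d_1+\dots+d_m}$.
   Context: All posets are finite. A poset $P$ is semipure if for every $x\in P$ all maximal chains of $P_{\le x}$ have the same length, the rank $r_P(x)$. For semipure $P,Q$, the Rees product $P*Q$ is $\{(p,q)\in P\times Q: r_P(p)\ge r_Q(q)\}$ with $(p_1,q_1)\le(p_2,q_2)$ iff $p_1\le p_2$, $q_1\le q_2$, and $r_P(p_2)-r_P(p_1)\ge r_Q(q_2)-r_Q(q_1)$. $T_{t,n}$ is the poset of all sequences of elements of $\{1,\dots,t\}$ of length at most $n$ (including the empty sequence, its minimum $\hat 0_T$), ordered by ``is a prefix of''; its Hasse diagram is a complete $t$-ary tree of height $n$ rooted at the bottom, and $r(f)$ is the length of the sequence $f$. $\hat Q$ denotes $Q$ with a new minimum $\hat 0$ and new maximum $\hat 1$ adjoined. *)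

theory Defs
  imports Main "HOL-Library.Sublist"
begin

definition is_poset :: "'a set \<Rightarrow> ('a \<Rightarrow> 'a \<Rightarrow> bool) \<Rightarrow> bool" where
  "is_poset A le \<longleftrightarrow>
     (\<forall>x\<in>A. le x x) \<and>
     (\<forall>x\<in>A. \<forall>y\<in>A. le x y \<and> le y x \<longrightarrow> x = y) \<and>
     (\<forall>x\<in>A. \<forall>y\<in>A. \<forall>z\<in>A. le x y \<and> le y z \<longrightarrow> le x z)"

definition is_chain :: "'a set \<Rightarrow> ('a \<Rightarrow> 'a \<Rightarrow> bool) \<Rightarrow> 'a set \<Rightarrow> bool" where
  "is_chain A le C \<longleftrightarrow> C \<subseteq> A \<and> (\<forall>x\<in>C. \<forall>y\<in>C. le x y \<or> le y x)"

definition is_maximal_chain :: "'a set \<Rightarrow> ('a \<Rightarrow> 'a \<Rightarrow> bool) \<Rightarrow> 'a set \<Rightarrow> bool" where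
  "is_maximal_chain A le C \<longleftrightarrow>
     is_chain A le C \<and> (\<forall>D. is_chain A le D \<and> C \<subseteq> D \<longrightarrow> D = C)"

definition maxchain_list :: "'a set \<Rightarrow> ('a \<Rightarrow> 'a \<Rightarrow> bool) \<Rightarrow> 'a list \<Rightarrow> bool" where
  "maxchain_list A le xs \<longleftrightarrow>
     sorted_wrt (\<lambda>x y. le x y \<and> x \<noteq> y) xs \<and> is_maximal_chain A le (set xs)"

definition down_set :: "'a set \<Rightarrow> ('a \<Rightarrow> 'a \<Rightarrow> bool) \<Rightarrow> 'a \<Rightarrow> 'a set" where
  "down_set A le x = {y\<in>A. le y x}"

definition semipure :: "'a set \<Rightarrow> ('a \<Rightarrow> 'a \<Rightarrow> bool) \<Rightarrow> bool" where
  "semipure A le \<longleftrightarrow>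
     (\<forall>x\<in>A. \<forall>C1 C2. is_maximal_chain (down_set A le x) le C1 \<and>
                      is_maximal_chain (down_set A le x) le C2 \<longrightarrow> card C1 = card C2)"

text \<open>Rank: the length (number of elements minus one) of the maximal chains of P_{<= x}
  (well defined for semipure posets).\<close>
definition rank :: "'a set \<Rightarrow> ('a \<Rightarrow> 'a \<Rightarrow> bool) \<Rightarrow> 'a \<Rightarrow> nat" where
  "rank A le x = Max {card C - 1 | C. is_maximal_chain (down_set A le x) le C}"

definition poset_length :: "'a set \<Rightarrow> ('a \<Rightarrow> 'a \<Rightarrow> bool) \<Rightarrow> nat \<Rightarrow> bool" where
  "poset_length A le n \<longleftrightarrow>
     (\<exists>C. is_chain A le C \<and> card C = n + 1) \<and> (\<forall>C. is_chain A le C \<longrightarrow> card C \<le> n + 1)"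

definition rees_carrier ::
  "'a set \<Rightarrow> ('a \<Rightarrow> 'a \<Rightarrow> bool) \<Rightarrow> 'b set \<Rightarrow> ('b \<Rightarrow> 'b \<Rightarrow> bool) \<Rightarrow> ('a \<times> 'b) set" where
  "rees_carrier A leA B leB = {(p, q). p \<in> A \<and> q \<in> B \<and> rank B leB q \<le> rank A leA p}"

definition rees_le ::
  "'a set \<Rightarrow> ('a \<Rightarrow> 'a \<Rightarrow> bool) \<Rightarrow> 'b set \<Rightarrow> ('b \<Rightarrow> 'b \<Rightarrow> bool) \<Rightarrow> ('a \<times> 'b) \<Rightarrow> ('a \<times> 'b) \<Rightarrow> bool" where
  "rees_le A leA B leB u v \<longleftrightarrow>
     leA (fst u) (fst v) \<and> leB (snd u) (snd v) \<and>
     int (rank A leA (fst v)) - int (rank A leA (fst u)) \<ge>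
     int (rank B leB (snd v)) - int (rank B leB (snd u))"

text \<open>The complete t-ary tree T_{t,n}: sequences over {1..t} of length at most n,
  ordered by the prefix relation.\<close>
definition tree_T :: "nat \<Rightarrow> nat \<Rightarrow> nat list set" where
  "tree_T t n = {f. set f \<subseteq> {1..t} \<and> length f \<le> n}"

datatype 'a hat = Bot | Elem 'a | Top

definition hat_carrier :: "'a set \<Rightarrow> 'a hat set" where
  "hat_carrier A = {Bot, Top} \<union> Elem ` A"

fun hat_le :: "('a \<Rightarrow> 'a \<Rightarrow> bool) \<Rightarrow> 'a hat \<Rightarrow> 'a hat \<Rightarrow> bool" where
  "hat_le le Bot y = True"
| "hat_le le (Elem a) Bot = False"
| "hat_le le (Elem a) (Elem b) = le a b"
| "hat_le le (Elem a) Top = True"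
| "hat_le le Top y = (y = Top)"

text \<open>The set [C,d] of maximal chains of the hat of P * T_{t,n}, where C is a maximal chain
  x_0 < ... < x_m of P (as an increasing list) and d = (d_1,...,d_m) is a list of length m.\<close>
definition block ::
  "'a set \<Rightarrow> ('a \<Rightarrow> 'a \<Rightarrow> bool) \<Rightarrow> nat \<Rightarrow> nat \<Rightarrow> 'a list \<Rightarrow> nat list \<Rightarrow> ('a \<times> nat list) hat list set" where
  "block A le t n C d =
     {ys. maxchain_list (hat_carrier (rees_carrier A le (tree_T t n) prefix))
                        (hat_le (rees_le A le (tree_T t n) prefix)) ys \<and>
          (\<exists>fs. length fs = length C \<and>
                ys = [Bot] @ map Elem (zip C fs) @ [Top] \<and>
                (\<forall>i\<in>{1..<length C}. int (length (fs ! i)) - int (length (fs ! (i - 1))) = int (d ! (i - 1))))}"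

end

theory Submission
  imports Defs
begin

text \<open>
  A maximal chain of the hat is Bot, then a maximal chain (x_0,f_0) < ... < (x_m,f_m) of
  P * T_{t,n}, then Top.  Its first coordinates form a maximal chain C of P (if some z could be
  inserted into C, a suitable word g would make (z,g) insertable into the original chain), so
  x_i has rank i.  The words then form a prefix chain starting at the empty word whose lengths
  grow by d_i in {0,1} at each step; hence the chain lies in exactly one block [C,d], and is
  determined by its top word f_m, which has length d_1 + ... + d_m.  Conversely every such word
  yields a maximal chain in [C,d], so |[C,d]| = t^(d_1 + ... + d_m).
\<close>

definition saturated :: "'a set \<Rightarrow> ('a \<Rightarrow> 'a \<Rightarrow> bool) \<Rightarrow> 'a set \<Rightarrow> bool" where
  "saturated A le S \<longleftrightarrow> (\<forall>w\<in>A. (\<forall>u\<in>S. le u w \<or> le w u) \<longrightarrow> w \<in> S)"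

lemma maximal_chain_iff_saturated:
  assumes refl: "\<forall>x\<in>A. le x x"
  shows "is_maximal_chain A le S \<longleftrightarrow> is_chain A le S \<and> saturated A le S"
proof
  assume max: "is_maximal_chain A le S"
  then have ch: "is_chain A le S" by (simp add: is_maximal_chain_def)
  have "w \<in> S" if "w \<in> A" "\<forall>u\<in>S. le u w \<or> le w u" for w
  proof -
    have "is_chain A le (insert w S)" using ch that refl by (auto simp: is_chain_def)
    then show ?thesis using max by (auto simp: is_maximal_chain_def)
  qed
  then show "is_chain A le S \<and> saturated A le S" using ch by (simp add: saturated_def)
next
  assume "is_chain A le S \<and> saturated A le S"
  then show "is_maximal_chain A le S"
    unfolding is_maximal_chain_def saturated_def is_chain_def by blast
qed

lemma sorted_strict_distinct: "sorted_wrt (\<lambda>x y. R x y \<and> x \<noteq> y) xs \<Longrightarrow> distinct xs"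
  by (induction xs) auto

lemma sorted_strict_chain:
  assumes "sorted_wrt (\<lambda>x y. le x y \<and> x \<noteq> y) xs" "set xs \<subseteq> A" "\<forall>x\<in>A. le x x"
  shows "is_chain A le (set xs)"
  unfolding is_chain_def
proof (intro conjI ballI)
  fix x y assume "x \<in> set xs" "y \<in> set xs"
  then obtain i j where ij: "i < length xs" "j < length xs" "x = xs ! i" "y = xs ! j"
    by (auto simp: in_set_conv_nth)
  consider "i < j" | "i = j" | "j < i" by arith
  then show "le x y \<or> le y x"
  proof cases
    case 2 then show ?thesis using ij assms(2,3) nth_mem by blast
  qed (use ij assms(1) in \<open>auto simp: sorted_wrt_iff_nth_less\<close>)
qed (fact assms(2))

lemma maxchain_list_iff:
  assumes "\<forall>x\<in>A. le x x"
  shows "maxchain_list A le xs \<longleftrightarrow>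
    sorted_wrt (\<lambda>x y. le x y \<and> x \<noteq> y) xs \<and> set xs \<subseteq> A \<and> saturated A le (set xs)"
proof -
  have "is_chain A le (set xs) \<longleftrightarrow> set xs \<subseteq> A"
    if "sorted_wrt (\<lambda>x y. le x y \<and> x \<noteq> y) xs"
    using sorted_strict_chain[OF that _ assms] by (auto simp: is_chain_def)
  then show ?thesis
    by (auto simp: maxchain_list_def maximal_chain_iff_saturated[of A le, OF assms])
qed

text \<open>In a finite poset every chain extends to a maximal one: take a largest chain containing it.\<close>
lemma extend_maxchain:
  assumes "finite A" "is_chain A le X"
  shows "\<exists>D. is_maximal_chain A le D \<and> X \<subseteq> D"
proof -
  have "\<exists>D. (is_chain A le D \<and> X \<subseteq> D) \<and>
      (\<forall>D'. is_chain A le D' \<and> X \<subseteq> D' \<longrightarrow> card D' \<le> card D)"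
  proof (rule ex_has_greatest_nat[where b = "card A + 1" and f = card])
    show "is_chain A le X \<and> X \<subseteq> X" using assms by auto
    show "\<forall>D. is_chain A le D \<and> X \<subseteq> D \<longrightarrow> card D < card A + 1"
      using assms(1) by (auto simp: is_chain_def intro: card_mono le_imp_less_Suc)
  qed
  then obtain D where D: "is_chain A le D" "X \<subseteq> D"
    and biggest: "\<And>D'. is_chain A le D' \<Longrightarrow> X \<subseteq> D' \<Longrightarrow> card D' \<le> card D" by blast
  have "D' = D" if "is_chain A le D'" "D \<subseteq> D'" for D'
  proof -
    have "finite D'" using that(1) assms(1) by (auto simp: is_chain_def intro: finite_subset)
    moreover have "card D' \<le> card D" using biggest that D(2) by blast
    ultimately have "card D = card D'" using card_mono[OF \<open>finite D'\<close> that(2)] by simp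
    then show ?thesis using card_subset_eq[OF \<open>finite D'\<close> that(2)] by simp
  qed
  then show ?thesis using D by (auto simp: is_maximal_chain_def)
qed

lemma sorted_wrt_starts_with:
  assumes "sorted_wrt R xs" "x \<in> set xs" "\<forall>y\<in>set xs. \<not> R y x"
  shows "\<exists>r. xs = x # r"
  using assms by (cases xs) auto

lemma sorted_wrt_ends_with:
  assumes "sorted_wrt R xs" "x \<in> set xs" "\<forall>y\<in>set xs. \<not> R x y"
  shows "\<exists>r. xs = r @ [x]"
proof -
  have "sorted_wrt (\<lambda>a b. R b a) (rev xs)" using assms(1) by (simp add: sorted_wrt_rev)
  then obtain r where "rev xs = x # r" using sorted_wrt_starts_with[of _ "rev xs" x] assms(2,3) by auto
  then have "xs = rev r @ [x]" by (metis rev_eq_Cons_iff)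
  then show ?thesis by blast
qed

lemma hat_le_Top [simp]: "hat_le le y Top"
  by (cases y) auto

lemma hat_le_Bot_iff [simp]: "hat_le le y Bot \<longleftrightarrow> y = Bot"
  by (cases y) auto

lemma hat_inner_list:
  assumes "\<forall>x\<in>set xs. x \<noteq> Bot \<and> x \<noteq> Top"
  shows "\<exists>zs. xs = map Elem zs"
  using assms
proof (induction xs)
  case (Cons x xs)
  then obtain zs where "xs = map Elem zs" by auto
  moreover obtain u where "x = Elem u" using Cons.prems by (cases x) auto
  ultimately have "x # xs = map Elem (u # zs)" by simp
  then show ?case by (rule exI)
qed simp

lemma map_Elem_eq_iff: "map Elem xs = map Elem ys \<longleftrightarrow> xs = ys"
  by (simp add: inj_map_eq_map inj_def)

text \<open>Saturation is unaffected by adjoining the new minimum and maximum, since these are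
  comparable with everything.\<close>
lemma hat_saturated_iff:
  "saturated (hat_carrier Q) (hat_le leQ) (set (Bot # map Elem zs @ [Top])) \<longleftrightarrow>
    saturated Q leQ (set zs)"
proof
  assume sat: "saturated (hat_carrier Q) (hat_le leQ) (set (Bot # map Elem zs @ [Top]))"
  show "saturated Q leQ (set zs)"
    unfolding saturated_def
  proof (intro ballI impI)
    fix w assume "w \<in> Q" "\<forall>u\<in>set zs. leQ u w \<or> leQ w u"
    then have "Elem w \<in> set (Bot # map Elem zs @ [Top])"
      using sat unfolding saturated_def hat_carrier_def by auto
    then show "w \<in> set zs" by auto
  qed
next
  assume sat: "saturated Q leQ (set zs)"
  show "saturated (hat_carrier Q) (hat_le leQ) (set (Bot # map Elem zs @ [Top]))"
    unfolding saturated_def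
  proof (intro ballI impI)
    fix w assume w: "w \<in> hat_carrier Q"
      and cmp: "\<forall>u\<in>set (Bot # map Elem zs @ [Top]). hat_le leQ u w \<or> hat_le leQ w u"
    show "w \<in> set (Bot # map Elem zs @ [Top])"
    proof (cases w)
      case (Elem u)
      then have "u \<in> Q" "\<forall>v\<in>set zs. leQ v u \<or> leQ u v"
        using w cmp by (auto simp: hat_carrier_def)
      then show ?thesis using sat Elem unfolding saturated_def by auto
    qed auto
  qed
qed

lemma hat_chain_shape:
  assumes sorted: "sorted_wrt (\<lambda>x y. hat_le leQ x y \<and> x \<noteq> y) ys"
    and ends: "Bot \<in> set ys" "Top \<in> set ys"
  shows "\<exists>zs. ys = Bot # map Elem zs @ [Top]"
proof -
  obtain r where r: "ys = Bot # r" "Top \<in> set r"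
    using sorted_wrt_starts_with[OF sorted ends(1)] ends(2) by auto
  then obtain mid where mid: "r = mid @ [Top]"
    using sorted_wrt_ends_with[of "\<lambda>x y. hat_le leQ x y \<and> x \<noteq> y" r Top] sorted by auto
  have "\<forall>x\<in>set mid. x \<noteq> Bot \<and> x \<noteq> Top"
    using sorted unfolding r mid by (auto simp: sorted_wrt_append)
  then obtain zs where "mid = map Elem zs" using hat_inner_list by blast
  then have "ys = Bot # map Elem zs @ [Top]" using r mid by simp
  then show ?thesis ..
qed

lemma maxchain_list_hat:
  assumes refl: "\<forall>x\<in>Q. leQ x x"
  shows "maxchain_list (hat_carrier Q) (hat_le leQ) ys \<longleftrightarrow>
    (\<exists>zs. ys = Bot # map Elem zs @ [Top] \<and> maxchain_list Q leQ zs)"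
proof -
  let ?H = "hat_carrier Q" and ?leH = "hat_le leQ"
  have refl_H: "\<forall>x\<in>?H. ?leH x x" using refl by (auto simp: hat_carrier_def)
  have sorted_iff: "sorted_wrt (\<lambda>x y. ?leH x y \<and> x \<noteq> y) (Bot # map Elem zs @ [Top]) \<longleftrightarrow>
      sorted_wrt (\<lambda>x y. leQ x y \<and> x \<noteq> y) zs" for zs
    by (auto simp: sorted_wrt_append sorted_wrt_map)
  have subset_iff: "set (Bot # map Elem zs @ [Top]) \<subseteq> ?H \<longleftrightarrow> set zs \<subseteq> Q" for zs
    by (auto simp: hat_carrier_def)
  have hat_iff: "maxchain_list ?H ?leH (Bot # map Elem zs @ [Top]) \<longleftrightarrow> maxchain_list Q leQ zs"
    for zs
    unfolding maxchain_list_iff[of ?H ?leH, OF refl_H] maxchain_list_iff[of Q leQ, OF refl]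
      hat_saturated_iff sorted_iff subset_iff ..
  show ?thesis
  proof
    assume ys: "maxchain_list ?H ?leH ys"
    then have "sorted_wrt (\<lambda>x y. ?leH x y \<and> x \<noteq> y) ys" "saturated ?H ?leH (set ys)"
      by (simp_all add: maxchain_list_iff[of ?H ?leH, OF refl_H])
    moreover have "Bot \<in> set ys" "Top \<in> set ys"
      using \<open>saturated ?H ?leH (set ys)\<close> unfolding saturated_def hat_carrier_def by auto
    ultimately obtain zs where "ys = Bot # map Elem zs @ [Top]" using hat_chain_shape by blast
    then show "\<exists>zs. ys = Bot # map Elem zs @ [Top] \<and> maxchain_list Q leQ zs"
      using ys hat_iff by blast
  qed (use hat_iff in blast)
qed

text \<open>In the tree T_{t,n} the elements below f are exactly the prefixes of f, a single chain,
  so the rank of f is its length.\<close>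
lemma rank_tree:
  assumes f: "f \<in> tree_T t n"
  shows "rank (tree_T t n) prefix f = length f"
proof -
  let ?P = "{p. prefix p f}"
  have down: "down_set (tree_T t n) prefix f = ?P"
    using f by (auto simp: down_set_def tree_T_def dest: prefix_length_le set_mono_prefix)
  have "is_chain ?P prefix ?P"
    using prefix_same_cases by (auto simp: is_chain_def)
  then have "is_maximal_chain ?P prefix C \<longleftrightarrow> C = ?P" for C
    unfolding is_maximal_chain_def is_chain_def by blast
  moreover have "card ?P = Suc (length f)"
    using card_set_prefixes[of f] by (simp add: in_set_prefixes[symmetric] del: in_set_prefixes)
  ultimately show ?thesis unfolding rank_def down by simp
qed

lemma tree_prefix_closed: "prefix f h \<Longrightarrow> h \<in> tree_T t n \<Longrightarrow> f \<in> tree_T t n"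
  by (auto simp: tree_T_def dest: prefix_length_le set_mono_prefix)

lemma prefix_take_take: "i \<le> j \<Longrightarrow> prefix (take i xs) (take j xs)"
  by (metis min.absorb1 take_is_prefix take_take)

lemma prefix_eq_take: "prefix f h \<Longrightarrow> f = take (length f) h"
  by (auto simp: prefix_def)

text \<open>Pairwise comparable lists (under the prefix order) have a common upper bound, namely the
  longest of them.\<close>
lemma prefix_chain_bound:
  assumes "finite L" "\<forall>f\<in>L. \<forall>h\<in>L. prefix f h \<or> prefix h f"
  shows "\<exists>F. (F \<in> L \<or> F = []) \<and> (\<forall>f\<in>L. prefix f F)"
  using assms
proof (induction L rule: finite_induct)
  case (insert x L)
  then obtain F where F: "F \<in> L \<or> F = []" "\<forall>f\<in>L. prefix f F" by auto
  have "prefix F x \<or> prefix x F" using F(1) insert.prems by auto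
  then show ?case
  proof
    assume "prefix F x"
    then show ?case using F(2) by (auto intro: prefix_order.trans)
  next
    assume "prefix x F"
    then show ?case using F by auto
  qed
qed simp

text \<open>Helly's theorem on the line: finitely many intervals [lo u, hi u] that pairwise
  intersect have a common point, which may be chosen below any common upper bound of the lo u.\<close>
lemma interval_common_point:
  fixes lo hi :: "'b \<Rightarrow> nat"
  assumes "finite S" "\<forall>u\<in>S. \<forall>v\<in>S. lo u \<le> hi v" "\<forall>u\<in>S. lo u \<le> b"
  shows "\<exists>k\<le>b. \<forall>u\<in>S. lo u \<le> k \<and> k \<le> hi u"
proof -
  define k where "k = Min (insert b (hi ` S))"
  have "k \<le> b" "\<forall>u\<in>S. k \<le> hi u" using assms(1) by (simp_all add: k_def)
  moreover have "\<forall>u\<in>S. lo u \<le> k" using assms by (simp add: k_def)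
  ultimately show ?thesis by blast
qed

locale semipure_poset =
  fixes A :: "'a set" and le :: "'a \<Rightarrow> 'a \<Rightarrow> bool"
  assumes finite_A: "finite A" and poset: "is_poset A le" and semipure: "semipure A le"
begin

lemma reflexive: "\<forall>x\<in>A. le x x"
  using poset by (simp add: is_poset_def)

lemma antisymmetric: "x \<in> A \<Longrightarrow> y \<in> A \<Longrightarrow> le x y \<Longrightarrow> le y x \<Longrightarrow> x = y"
  using poset unfolding is_poset_def by blast

lemma transitive: "x \<in> A \<Longrightarrow> y \<in> A \<Longrightarrow> z \<in> A \<Longrightarrow> le x y \<Longrightarrow> le y z \<Longrightarrow> le x z"
  using poset unfolding is_poset_def by blast

text \<open>The elements of a maximal chain D lying below x \<in> D form a maximal chain of the down-set
  of x: anything in the down-set comparable with them is comparable with all of D.\<close>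
lemma maxchain_below:
  assumes D: "is_maximal_chain A le D" and x: "x \<in> D"
  shows "is_maximal_chain (down_set A le x) le {y\<in>D. le y x}"
proof -
  let ?M = "{y\<in>D. le y x}"
  have "is_chain A le D \<and> saturated A le D"
    using D by (simp add: maximal_chain_iff_saturated[of A le, OF reflexive])
  then have D_sat: "saturated A le D" and DA: "D \<subseteq> A"
    and D_ch: "\<forall>a\<in>D. \<forall>b\<in>D. le a b \<or> le b a"
    by (simp_all add: is_chain_def)
  have xA: "x \<in> A" using DA x by auto
  have "saturated (down_set A le x) le ?M"
    unfolding saturated_def
  proof (intro ballI impI)
    fix w assume w: "w \<in> down_set A le x" and cmp: "\<forall>u\<in>?M. le u w \<or> le w u"
    have wA: "w \<in> A" and wx: "le w x" using w by (simp_all add: down_set_def)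
    have "le b w \<or> le w b" if b: "b \<in> D" for b
    proof (cases "le b x")
      case True then show ?thesis using cmp b by blast
    next
      case False
      then have "le x b" using D_ch x b by blast
      then show ?thesis using transitive[OF wA xA _ wx] b DA by blast
    qed
    then have "w \<in> D" using D_sat wA unfolding saturated_def by blast
    then show "w \<in> ?M" using wx by simp
  qed
  moreover have "is_chain (down_set A le x) le ?M"
    using DA D_ch by (auto simp: is_chain_def down_set_def)
  moreover have "\<forall>y\<in>down_set A le x. le y y" using reflexive by (simp add: down_set_def)
  ultimately show ?thesis by (simp add: maximal_chain_iff_saturated)
qed

text \<open>By semipurity the rank of x can therefore be read off any maximal chain through x.\<close>
lemma rank_in_maxchain:
  assumes D: "is_maximal_chain A le D" and x: "x \<in> D"
  shows "rank A le x = card {y\<in>D. le y x} - 1"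
proof -
  let ?M = "{y\<in>D. le y x}"
  have M_max: "is_maximal_chain (down_set A le x) le ?M" using maxchain_below[OF D x] .
  have xA: "x \<in> A" using D x by (auto simp: is_maximal_chain_def is_chain_def)
  have same_card: "card C = card ?M" if "is_maximal_chain (down_set A le x) le C" for C
    using semipure xA M_max that unfolding semipure_def by blast
  have "{card C - 1 | C. is_maximal_chain (down_set A le x) le C} = {card ?M - 1}"
  proof (rule set_eqI)
    fix c
    show "c \<in> {card C - 1 | C. is_maximal_chain (down_set A le x) le C} \<longleftrightarrow> c \<in> {card ?M - 1}"
    proof
      assume "c \<in> {card C - 1 | C. is_maximal_chain (down_set A le x) le C}"
      then obtain C where "c = card C - 1" "is_maximal_chain (down_set A le x) le C" by blast
      then show "c \<in> {card ?M - 1}" using same_card by simp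
    next
      assume "c \<in> {card ?M - 1}"
      then have "c = card ?M - 1" by simp
      then show "c \<in> {card C - 1 | C. is_maximal_chain (down_set A le x) le C}"
        using M_max by blast
    qed
  qed
  then show ?thesis unfolding rank_def by simp
qed

text \<open>The rank is strictly monotone: inside a maximal chain through x < y, fewer elements lie
  below x than below y.\<close>
lemma rank_less:
  assumes "x \<in> A" "y \<in> A" "le x y" "x \<noteq> y"
  shows "rank A le x < rank A le y"
proof -
  have "is_chain A le {x, y}" using assms reflexive by (auto simp: is_chain_def)
  then obtain D where D: "is_maximal_chain A le D" "{x, y} \<subseteq> D"
    using extend_maxchain[OF finite_A] by blast
  have fin: "finite D" using D(1) finite_A
    by (auto simp: is_maximal_chain_def is_chain_def intro: finite_subset)
  have DA: "D \<subseteq> A" using D(1) by (simp add: is_maximal_chain_def is_chain_def)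
  have "{z\<in>D. le z x} \<subseteq> {z\<in>D. le z y}"
    using assms DA transitive[of _ x y] by blast
  moreover have "y \<notin> {z\<in>D. le z x}" using assms antisymmetric[of x y] by blast
  moreover have "y \<in> {z\<in>D. le z y}" using D(2) assms(2) reflexive by blast
  ultimately have "{z\<in>D. le z x} \<subset> {z\<in>D. le z y}" by blast
  then have "card {z\<in>D. le z x} < card {z\<in>D. le z y}"
    using fin by (intro psubset_card_mono) auto
  moreover have "x \<in> {z\<in>D. le z x}" using D(2) assms(1) reflexive by auto
  then have "card {z\<in>D. le z x} \<noteq> 0" using fin by auto
  ultimately show ?thesis using rank_in_maxchain[OF D(1)] D(2) by simp
qed

lemma below_nth:
  assumes sorted: "sorted_wrt (\<lambda>x y. le x y \<and> x \<noteq> y) C" and CA: "set C \<subseteq> A"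
    and i: "i < length C"
  shows "{y\<in>set C. le y (C ! i)} = set (take (Suc i) C)"
proof (intro equalityI subsetI)
  fix y assume "y \<in> {y\<in>set C. le y (C ! i)}"
  then obtain j where j: "j < length C" "y = C ! j" "le (C ! j) (C ! i)"
    by (auto simp: in_set_conv_nth)
  have "j \<le> i"
  proof (rule ccontr)
    assume "\<not> j \<le> i"
    then have "le (C ! i) (C ! j)" "C ! i \<noteq> C ! j"
      using sorted j(1) by (auto simp: sorted_wrt_iff_nth_less)
    then show False using antisymmetric j(1,3) CA i by (meson nth_mem subsetD)
  qed
  then show "y \<in> set (take (Suc i) C)" using j i by (auto simp: nth_image[symmetric])
next
  fix y assume "y \<in> set (take (Suc i) C)"
  then obtain j where j: "j \<le> i" "y = C ! j"
    using i by (auto simp: nth_image[symmetric] less_Suc_eq_le)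
  have "le (C ! j) (C ! i)"
  proof (cases "j = i")
    case True
    have "C ! i \<in> A" using CA i by (meson nth_mem subsetD)
    then show ?thesis using True reflexive by simp
  next
    case False
    then show ?thesis using sorted i j(1) by (simp add: sorted_wrt_iff_nth_less)
  qed
  then show "y \<in> {y\<in>set C. le y (C ! i)}" using j i by simp
qed

lemma rank_nth:
  assumes C: "maxchain_list A le C" and i: "i < length C"
  shows "rank A le (C ! i) = i"
proof -
  have sorted: "sorted_wrt (\<lambda>x y. le x y \<and> x \<noteq> y) C" and C_max: "is_maximal_chain A le (set C)"
    using C by (simp_all add: maxchain_list_def)
  have CA: "set C \<subseteq> A" using C_max by (simp add: is_maximal_chain_def is_chain_def)
  have "card (set (take (Suc i) C)) = Suc i"
    using sorted_strict_distinct[OF sorted] i by (simp add: distinct_card)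
  then show ?thesis using rank_in_maxchain[OF C_max] i below_nth[OF sorted CA i] by simp
qed

end

text \<open>Pairing a maximal chain
  C = (x_0,...,x_m) of P with this chain of words gives the maximal chains in the block [C,d].\<close>
definition psum :: "nat list \<Rightarrow> nat \<Rightarrow> nat" where
  "psum d i = sum_list (take i d)"

definition word_chain :: "nat list \<Rightarrow> nat \<Rightarrow> nat list \<Rightarrow> nat list list" where
  "word_chain d m g = map (\<lambda>i. take (psum d i) g) [0..<m]"

definition lift_chain :: "'a list \<Rightarrow> nat list \<Rightarrow> nat list \<Rightarrow> ('a \<times> nat list) hat list" where
  "lift_chain C d g = Bot # map Elem (zip C (word_chain d (length C) g)) @ [Top]"

definition words :: "nat \<Rightarrow> nat \<Rightarrow> nat list set" where
  "words t s = {g. set g \<subseteq> {1..t} \<and> length g = s}"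

lemma psum_Suc: "i < length d \<Longrightarrow> psum d (Suc i) = psum d i + d ! i"
  by (simp add: psum_def take_Suc_conv_app_nth)

lemma psum_all: "length d \<le> i \<Longrightarrow> psum d i = sum_list d"
  by (simp add: psum_def)

lemma psum_le_sum: "psum d i \<le> sum_list d"
  unfolding psum_def by (metis append_take_drop_id le_add1 sum_list_append)

lemma psum_01_mono:
  assumes "set d \<subseteq> {0, 1}" "i \<le> j"
  shows "psum d i \<le> psum d j \<and> psum d j \<le> psum d i + (j - i)"
  using assms(2)
proof (induction j)
  case (Suc j)
  show ?case
  proof (cases "i = Suc j")
    case False
    then have "i \<le> j" using Suc.prems by simp
    moreover have "psum d (Suc j) = psum d j + (if j < length d then d ! j else 0)"
      by (simp add: psum_Suc psum_all)
    moreover have "j < length d \<Longrightarrow> d ! j \<le> 1" using assms(1) nth_mem by fastforce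
    ultimately show ?thesis using Suc.IH by auto
  qed simp
qed simp

lemma psum_01_le: "set d \<subseteq> {0, 1} \<Longrightarrow> psum d i \<le> i"
  using psum_01_mono[of d 0 i] by (simp add: psum_def)

lemma word_chain_nth: "i < m \<Longrightarrow> word_chain d m g ! i = take (psum d i) g"
  by (simp add: word_chain_def)

lemma length_word_chain_nth:
  "i < m \<Longrightarrow> length g = sum_list d \<Longrightarrow> length (word_chain d m g ! i) = psum d i"
  using psum_le_sum[of d i] by (simp add: word_chain_nth)

lemma length_word_chain [simp]: "length (word_chain d m g) = m"
  by (simp add: word_chain_def)

lemma block_determines:
  assumes "ys \<in> block A le t n C d" "ys \<in> block A le t n C' d'"
    and "length d = length C - 1" "length d' = length C' - 1"
  shows "C = C' \<and> d = d'"
proof -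
  obtain fs where fs: "length fs = length C" "ys = Bot # map Elem (zip C fs) @ [Top]"
    and d: "\<forall>i\<in>{1..<length C}. int (length (fs ! i)) - int (length (fs ! (i - 1))) = int (d ! (i - 1))"
    using assms(1) by (auto simp: block_def)
  obtain fs' where fs': "length fs' = length C'" "ys = Bot # map Elem (zip C' fs') @ [Top]"
    and d': "\<forall>i\<in>{1..<length C'}. int (length (fs' ! i)) - int (length (fs' ! (i - 1))) = int (d' ! (i - 1))"
    using assms(2) by (auto simp: block_def)
  have "zip C fs = zip C' fs'" using fs(2) fs'(2) by (simp add: map_Elem_eq_iff)
  then have same: "C = C'" "fs = fs'"
    using arg_cong[of _ _ "map fst"] arg_cong[of _ _ "map snd"] fs(1) fs'(1) by (metis map_fst_zip map_snd_zip)+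
  have "d = d'"
  proof (rule nth_equalityI)
    show "length d = length d'" using assms(3,4) same by simp
    fix i assume "i < length d"
    then have "Suc i \<in> {1..<length C}" using assms(3) by auto
    then show "d ! i = d' ! i" using d d' same by fastforce
  qed
  then show ?thesis using same by simp
qed

locale rees_tree = semipure_poset +
  fixes n t :: nat
  assumes length_n: "poset_length A le n"
begin

abbreviation PT :: "('a \<times> nat list) set" where
  "PT \<equiv> rees_carrier A le (tree_T t n) prefix"

abbreviation lePT :: "'a \<times> nat list \<Rightarrow> 'a \<times> nat list \<Rightarrow> bool" where
  "lePT \<equiv> rees_le A le (tree_T t n) prefix"

text \<open>Membership and order in P * T_{t,n}, using that the rank of a word in the tree is its
  length.\<close>
lemma mem_PT: "(x, f) \<in> PT \<longleftrightarrow> x \<in> A \<and> f \<in> tree_T t n \<and> length f \<le> rank A le x"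
  by (auto simp: rees_carrier_def rank_tree)

lemma lePT_iff:
  assumes "f \<in> tree_T t n" "h \<in> tree_T t n"
  shows "lePT (x, f) (y, h) \<longleftrightarrow> le x y \<and> prefix f h \<and>
    int (length h) - int (length f) \<le> int (rank A le y) - int (rank A le x)"
  using assms by (simp add: rees_le_def rank_tree)

lemma PT_refl: "\<forall>u\<in>PT. lePT u u"
  using reflexive by (auto simp: rees_carrier_def rees_le_def)

text \<open>Two comparable elements of the Rees product over the same element of P coincide:
  the tree coordinate can only grow along a prefix while its rank may not grow.\<close>
lemma PT_same_fst:
  assumes "u \<in> PT" "v \<in> PT" "lePT u v" "fst u = fst v"
  shows "u = v"
proof -
  obtain x f y h where uv: "u = (x, f)" "v = (y, h)" by fastforce
  then have "prefix f h" "length h \<le> length f"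
    using assms by (auto simp: mem_PT lePT_iff)
  then show ?thesis using uv assms(4) by (metis prefix_length_prefix prefix_order.antisym prod.sel(1) prefix_order.refl)
qed

lemma rank_bounded: "x \<in> A \<Longrightarrow> rank A le x \<le> n"
proof -
  assume x: "x \<in> A"
  have "is_chain A le {x}" using x reflexive by (simp add: is_chain_def)
  then obtain D where D: "is_maximal_chain A le D" "x \<in> D"
    using extend_maxchain[OF finite_A] by blast
  have "card D \<le> n + 1"
    using length_n D(1) by (simp add: poset_length_def is_maximal_chain_def)
  moreover have "card {y\<in>D. le y x} \<le> card D"
    using D(1) finite_A by (intro card_mono) (auto simp: is_maximal_chain_def is_chain_def intro: finite_subset)
  ultimately show ?thesis using rank_in_maxchain[OF D] by simp
qed

text \<open>P has length n, so it is nonempty and its maximal chains are nonempty.\<close>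
lemma maxchain_nonempty: "maxchain_list A le C \<Longrightarrow> C \<noteq> []"
proof
  assume "maxchain_list A le C" "C = []"
  then have "saturated A le {}" by (simp add: maxchain_list_iff[of A le, OF reflexive])
  then have "A = {}" by (simp add: saturated_def)
  then show False using length_n by (simp add: poset_length_def is_chain_def)
qed

lemma lePT_on_branch:
  assumes x: "x \<in> A" "f \<in> tree_T t n" and z: "z \<in> A" "g \<in> tree_T t n"
    and cmp: "x \<noteq> z" "le x z \<or> le z x"
    and branch: "prefix f F" "prefix g F"
    and bounds: "length f - (rank A le x - rank A le z) \<le> length g"
      "length g \<le> length f + (rank A le z - rank A le x)"
  shows "lePT (x, f) (z, g) \<or> lePT (z, g) (x, f)"
proof -
  have f_take: "f = take (length f) F" and g_take: "g = take (length g) F"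
    using branch prefix_eq_take by blast+
  consider "le x z" "rank A le x < rank A le z" | "le z x" "rank A le z < rank A le x"
    using cmp rank_less x(1) z(1) by blast
  then show ?thesis
  proof cases
    case 1
    then have "length f \<le> length g" using bounds(1) by simp
    then have "prefix (take (length f) F) (take (length g) F)" by (rule prefix_take_take)
    then have "prefix f g" by (simp only: f_take[symmetric] g_take[symmetric])
    moreover have "int (length g) - int (length f) \<le> int (rank A le z) - int (rank A le x)"
      using bounds(2) 1 by linarith
    ultimately show ?thesis using 1 lePT_iff[OF x(2) z(2)] by simp
  next
    case 2
    then have "length g \<le> length f" using bounds(2) by simp
    then have "prefix (take (length g) F) (take (length f) F)" by (rule prefix_take_take)
    then have "prefix g f" by (simp only: f_take[symmetric] g_take[symmetric])
    moreover have "int (length f) - int (length g) \<le> int (rank A le x) - int (rank A le z)"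
      using bounds(1) 2 by linarith
    ultimately show ?thesis using 2 lePT_iff[OF z(2) x(2)] by simp
  qed
qed

text \<open>The word g is a prefix of the longest word F
  occurring in S; for u = (x, f) its length k must satisfy |f| - (rk x - rk z) <= k <= |f| +
  (rk z - rk x) (truncated subtraction), and these intervals pairwise intersect because S is a
  chain.\<close>
lemma extend_chain_at:
  assumes S: "finite S" "S \<subseteq> PT" "\<forall>u\<in>S. \<forall>v\<in>S. lePT u v \<or> lePT v u"
    and z: "z \<in> A" and sides: "\<forall>u\<in>S. fst u \<noteq> z \<and> (le (fst u) z \<or> le z (fst u))"
  shows "\<exists>g. (z, g) \<in> PT \<and> (\<forall>u\<in>S. lePT u (z, g) \<or> lePT (z, g) u)"
proof -
  define r where "r = rank A le z"
  define \<rho> where "\<rho> u = rank A le (fst u)" for u :: "'a \<times> nat list"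
  define a where "a u = length (snd u)" for u :: "'a \<times> nat list"
  have in_PT: "fst u \<in> A" "snd u \<in> tree_T t n" "a u \<le> \<rho> u" if "u \<in> S" for u
    using that S(2) mem_PT[of "fst u" "snd u"] by (auto simp: a_def \<rho>_def)
  have cmp: "prefix (snd u) (snd v) \<and> int (a v) - int (a u) \<le> int (\<rho> v) - int (\<rho> u)"
    if "u \<in> S" "v \<in> S" "lePT u v" for u v
    using that in_PT lePT_iff[of "snd u" "snd v" "fst u" "fst v"] by (simp add: a_def \<rho>_def)
  have "\<forall>f\<in>snd ` S. \<forall>h\<in>snd ` S. prefix f h \<or> prefix h f"
    using S(3) cmp by blast
  then obtain F where F: "F \<in> snd ` S \<or> F = []" "\<forall>u\<in>S. prefix (snd u) F"
    using prefix_chain_bound[of "snd ` S"] S(1) by blast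
  have "[] \<in> tree_T t n" by (simp add: tree_T_def)
  then have F_tree: "F \<in> tree_T t n" using F(1) in_PT(2) by blast
  define lo where "lo u = a u - (\<rho> u - r)" for u
  define hi where "hi u = a u + (r - \<rho> u)" for u
  have lo_hi: "lo u \<le> hi v" if "u \<in> S" "v \<in> S" for u v
    using S(3) that cmp[of u v] cmp[of v u] prefix_length_le[of "snd u" "snd v"]
    unfolding lo_def hi_def a_def by fastforce
  have "lo u \<le> r" "lo u \<le> length F" if "u \<in> S" for u
    using in_PT[OF that] F(2) that prefix_length_le by (fastforce simp: lo_def a_def)+
  then have "\<forall>u\<in>S. lo u \<le> min r (length F)" by simp
  moreover have "\<forall>u\<in>S. \<forall>v\<in>S. lo u \<le> hi v" using lo_hi by blast
  ultimately obtain k where k_le: "k \<le> min r (length F)" and k: "\<forall>u\<in>S. lo u \<le> k \<and> k \<le> hi u"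
    using interval_common_point[OF S(1)] by blast
  define g where "g = take k F"
  have g_len: "length g = k" using k_le by (simp add: g_def)
  have g_tree: "g \<in> tree_T t n" using F_tree take_is_prefix tree_prefix_closed by (metis g_def)
  have "lePT u (z, g) \<or> lePT (z, g) u" if u: "u \<in> S" for u
  proof -
    obtain x f where u_eq: "u = (x, f)" by fastforce
    have "length f - (rank A le x - rank A le z) \<le> length g"
      "length g \<le> length f + (rank A le z - rank A le x)"
      using k u u_eq g_len by (auto simp: lo_def hi_def a_def \<rho>_def r_def)
    moreover have "x \<in> A" "f \<in> tree_T t n" using in_PT[OF u] u_eq by simp_all
    moreover have "x \<noteq> z" "le x z \<or> le z x" using sides u u_eq by auto
    moreover have "prefix f F" using F(2) u u_eq by auto
    moreover have "prefix g F" by (simp add: g_def take_is_prefix)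
    ultimately show ?thesis using lePT_on_branch[of x f z g F] z g_tree u_eq by simp
  qed
  moreover have "(z, g) \<in> PT" using z g_tree g_len k_le by (simp add: mem_PT r_def)
  ultimately show ?thesis by blast
qed

text \<open>Projecting a maximal chain of P * T_{t,n} to its first coordinates gives a maximal
  chain of P: if it could be refined by some z, then by the construction above so could the
  original chain.\<close>
lemma maxchain_PT_fst:
  assumes zs: "maxchain_list PT lePT zs"
  shows "maxchain_list A le (map fst zs)"
proof -
  have sorted: "sorted_wrt (\<lambda>u v. lePT u v \<and> u \<noteq> v) zs" and zs_PT: "set zs \<subseteq> PT"
    and sat: "saturated PT lePT (set zs)"
    using zs by (simp_all add: maxchain_list_iff[of PT lePT, OF PT_refl])
  have chain: "\<forall>u\<in>set zs. \<forall>v\<in>set zs. lePT u v \<or> lePT v u"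
    using sorted_strict_chain[OF sorted zs_PT PT_refl] by (simp add: is_chain_def)
  have fst_A: "fst u \<in> A" if "u \<in> set zs" for u
    using that zs_PT by (auto simp: rees_carrier_def)
  have "sorted_wrt (\<lambda>x y. le x y \<and> x \<noteq> y) (map fst zs)"
    unfolding sorted_wrt_map
  proof (rule sorted_wrt_mono_rel[OF _ sorted])
    fix u v assume uv: "u \<in> set zs" "v \<in> set zs" "lePT u v \<and> u \<noteq> v"
    moreover have "u \<in> PT" "v \<in> PT" using uv zs_PT by auto
    ultimately show "le (fst u) (fst v) \<and> fst u \<noteq> fst v"
      using PT_same_fst[of u v] by (auto simp: rees_le_def)
  qed
  moreover have "saturated A le (fst ` set zs)"
    unfolding saturated_def
  proof (intro ballI impI)
    fix z assume z: "z \<in> A" and cmp: "\<forall>x\<in>fst ` set zs. le x z \<or> le z x"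
    show "z \<in> fst ` set zs"
    proof (rule ccontr)
      assume z_new: "z \<notin> fst ` set zs"
      have "\<forall>u\<in>set zs. fst u \<noteq> z \<and> (le (fst u) z \<or> le z (fst u))"
        using cmp z_new by force
      then obtain g where g: "(z, g) \<in> PT" "\<forall>u\<in>set zs. lePT u (z, g) \<or> lePT (z, g) u"
        using extend_chain_at[OF finite_set zs_PT chain z] by blast
      then have "(z, g) \<in> set zs" using sat by (simp add: saturated_def)
      then show False using z_new by force
    qed
  qed
  moreover have "set (map fst zs) \<subseteq> A" using fst_A by auto
  ultimately show ?thesis by (simp add: maxchain_list_iff[of A le, OF reflexive])
qed

text \<open>A family of elements of P * T_{t,n}, one over each element of a maximal chain C of P,
  cannot be refined: an element comparable with all of them lies over some element of C (by
  maximality of C) and then coincides with the member over it.\<close>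
lemma zip_saturated:
  assumes C: "maxchain_list A le C" and fs: "length fs = length C"
    and sub: "set (zip C fs) \<subseteq> PT"
  shows "saturated PT lePT (set (zip C fs))"
  unfolding saturated_def
proof (intro ballI impI)
  fix w assume w: "w \<in> PT" and cmp: "\<forall>u\<in>set (zip C fs). lePT u w \<or> lePT w u"
  have member: "(C ! i, fs ! i) \<in> set (zip C fs)" if "i < length C" for i
    using that fs by (metis in_set_zip fst_conv snd_conv)
  have "le x (fst w) \<or> le (fst w) x" if "x \<in> set C" for x
  proof -
    obtain i where i: "i < length C" "x = C ! i" using \<open>x \<in> set C\<close> by (auto simp: in_set_conv_nth)
    then show ?thesis using cmp member[OF i(1)] by (auto simp: rees_le_def)
  qed
  then have "fst w \<in> set C"
    using C w by (auto simp: maxchain_list_iff[of A le, OF reflexive] saturated_def rees_carrier_def)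
  then obtain i where i: "i < length C" "fst w = C ! i" by (auto simp: in_set_conv_nth)
  then have "w = (C ! i, fs ! i)"
    using cmp member[OF i(1)] sub PT_same_fst[OF _ w] PT_same_fst[OF w] by fastforce
  then show "w \<in> set (zip C fs)" using member[OF i(1)] by simp
qed

lemma lift_maxchain:
  assumes C: "maxchain_list A le C" and d: "set d \<subseteq> {0, 1}"
    and g: "set g \<subseteq> {1..t}" "length g = sum_list d"
  shows "maxchain_list PT lePT (zip C (word_chain d (length C) g))"
proof -
  define zs where "zs = zip C (word_chain d (length C) g)"
  have C_sorted: "sorted_wrt (\<lambda>x y. le x y \<and> x \<noteq> y) C" and C_A: "set C \<subseteq> A"
    using C by (simp_all add: maxchain_list_iff[of A le, OF reflexive])
  have len: "length zs = length C" by (simp add: zs_def)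
  have zs_nth: "zs ! i = (C ! i, take (psum d i) g)" if "i < length C" for i
    using that by (simp add: zs_def word_chain_nth)
  have word_len: "length (take (psum d i) g) = psum d i" for i
    using psum_le_sum[of d i] g(2) by simp
  have word_tree: "take (psum d i) g \<in> tree_T t n" if i: "i < length C" for i
  proof -
    have "psum d i \<le> rank A le (C ! i)" using psum_01_le[OF d] rank_nth[OF C i] by simp
    also have "\<dots> \<le> n" using rank_bounded C_A i by (meson nth_mem subsetD)
    finally show ?thesis using g(1) word_len by (auto simp: tree_T_def dest: in_set_takeD)
  qed
  have zs_PT: "zs ! i \<in> PT" if i: "i < length C" for i
    using zs_nth[OF i] word_tree[OF i] word_len psum_01_le[OF d] rank_nth[OF C i] C_A i
    by (simp add: mem_PT subset_iff)
  have "sorted_wrt (\<lambda>u v. lePT u v \<and> u \<noteq> v) zs"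
    unfolding sorted_wrt_iff_nth_less len
  proof (intro allI impI)
    fix i j assume ij: "i < j" "j < length C"
    have "le (C ! i) (C ! j)" "C ! i \<noteq> C ! j"
      using C_sorted ij by (auto simp: sorted_wrt_iff_nth_less)
    moreover have "psum d i \<le> psum d j" "psum d j \<le> psum d i + (j - i)"
      using psum_01_mono[OF d, of i j] ij by auto
    ultimately have "prefix (take (psum d i) g) (take (psum d j) g)"
      "int (psum d j) - int (psum d i) \<le> int j - int i"
      using prefix_take_take ij by auto
    then show "lePT (zs ! i) (zs ! j) \<and> zs ! i \<noteq> zs ! j"
      using ij zs_nth word_tree word_len rank_nth[OF C] lePT_iff \<open>le (C ! i) (C ! j)\<close>
        \<open>C ! i \<noteq> C ! j\<close> by simp
  qed
  moreover have "set zs \<subseteq> PT" using zs_PT len by (metis in_set_conv_nth subsetI)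
  moreover have "saturated PT lePT (set zs)"
    using zip_saturated[OF C _ \<open>set zs \<subseteq> PT\<close>[unfolded zs_def]] by (simp add: zs_def)
  ultimately show ?thesis by (simp add: zs_def maxchain_list_iff[of PT lePT, OF PT_refl])
qed

lemma words_along_maxchain:
  assumes C: "maxchain_list A le C" and fs: "length fs = length C"
    and zs: "maxchain_list PT lePT (zip C fs)" and ij: "i \<le> j" "j < length C"
  shows "prefix (fs ! i) (fs ! j)" "length (fs ! j) \<le> length (fs ! i) + (j - i)"
    and "fs ! j \<in> tree_T t n" "length (fs ! j) \<le> j"
proof -
  have sorted: "sorted_wrt (\<lambda>u v. lePT u v \<and> u \<noteq> v) (zip C fs)"
    and sub: "set (zip C fs) \<subseteq> PT"
    using zs by (simp_all add: maxchain_list_iff[of PT lePT, OF PT_refl])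
  have in_PT: "(C ! k, fs ! k) \<in> PT" if "k < length C" for k
    using sub that fs by (metis in_set_zip fst_conv snd_conv subsetD)
  show j_tree: "fs ! j \<in> tree_T t n" and "length (fs ! j) \<le> j"
    using in_PT[OF ij(2)] rank_nth[OF C ij(2)] by (simp_all add: mem_PT)
  have "prefix (fs ! i) (fs ! j) \<and> length (fs ! j) \<le> length (fs ! i) + (j - i)"
  proof (cases "i = j")
    case False
    then have "lePT (C ! i, fs ! i) (C ! j, fs ! j)"
      using sorted ij fs by (simp add: sorted_wrt_iff_nth_less)
    moreover have "fs ! i \<in> tree_T t n" using in_PT ij by (simp add: mem_PT)
    ultimately show ?thesis
      using lePT_iff j_tree rank_nth[OF C] ij by auto
  qed simp
  then show "prefix (fs ! i) (fs ! j)" "length (fs ! j) \<le> length (fs ! i) + (j - i)" by simp_all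
qed

lemma block_iff:
  "ys \<in> block A le t n C d \<longleftrightarrow>
    (\<exists>fs. length fs = length C \<and> ys = Bot # map Elem (zip C fs) @ [Top] \<and>
       maxchain_list PT lePT (zip C fs) \<and>
       (\<forall>i\<in>{1..<length C}. int (length (fs ! i)) - int (length (fs ! (i - 1))) = int (d ! (i - 1))))"
proof -
  let ?steps = "\<lambda>fs. \<forall>i\<in>{1..<length C}.
    int (length (fs ! i)) - int (length (fs ! (i - 1))) = int (d ! (i - 1))"
  have "ys \<in> block A le t n C d \<longleftrightarrow>
      (\<exists>zs. ys = Bot # map Elem zs @ [Top] \<and> maxchain_list PT lePT zs) \<and>
      (\<exists>fs. length fs = length C \<and> ys = Bot # map Elem (zip C fs) @ [Top] \<and> ?steps fs)"
    unfolding block_def maxchain_list_hat[of PT lePT, OF PT_refl] by simp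
  also have "\<dots> \<longleftrightarrow> (\<exists>fs. length fs = length C \<and> ys = Bot # map Elem (zip C fs) @ [Top] \<and>
      maxchain_list PT lePT (zip C fs) \<and> ?steps fs)"
    by (auto simp: map_Elem_eq_iff)
  finally show ?thesis .
qed

text \<open>Inside a block, the lengths of the words are the partial sums of d, since the first
  word (over an element of rank 0) is empty.\<close>
lemma block_word_lengths:
  assumes C: "maxchain_list A le C" and fs: "length fs = length C"
    and zs: "maxchain_list PT lePT (zip C fs)" and d: "length d = length C - 1"
    and steps: "\<forall>i\<in>{1..<length C}. int (length (fs ! i)) - int (length (fs ! (i - 1))) = int (d ! (i - 1))"
    and i: "i < length C"
  shows "length (fs ! i) = psum d i"
  using i
proof (induction i)
  case 0
  then show ?case using words_along_maxchain(4)[OF C fs zs, of 0 0] by (simp add: psum_def)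
next
  case (Suc i)
  then have "int (length (fs ! Suc i)) - int (length (fs ! i)) = int (d ! i)"
    using steps by force
  then show ?case using Suc d by (simp add: psum_Suc)
qed

text \<open>Every chain in the block [C,d] is the lift of the word over the top element x_m.\<close>
lemma block_member_is_lift:
  assumes C: "maxchain_list A le C" and d: "length d = length C - 1"
    and ys: "ys \<in> block A le t n C d"
  shows "\<exists>g\<in>words t (sum_list d). ys = lift_chain C d g"
proof -
  obtain fs where fs: "length fs = length C" and ys: "ys = Bot # map Elem (zip C fs) @ [Top]"
    and zs: "maxchain_list PT lePT (zip C fs)"
    and steps: "\<forall>i\<in>{1..<length C}. int (length (fs ! i)) - int (length (fs ! (i - 1))) = int (d ! (i - 1))"
    using ys by (auto simp: block_iff)
  note len = block_word_lengths[OF C fs zs d steps]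
  define m where "m = length C"
  have m: "0 < m" using maxchain_nonempty[OF C] by (simp add: m_def)
  define G where "G = fs ! (m - 1)"
  have "fs = word_chain d (length C) G"
  proof (rule nth_equalityI)
    fix i assume "i < length fs"
    then have i: "i < m" using fs by (simp add: m_def)
    have "prefix (fs ! i) G" using words_along_maxchain(1)[OF C fs zs, of i "m - 1"] i
      by (simp add: G_def m_def)
    then have "fs ! i = take (length (fs ! i)) G" by (rule prefix_eq_take)
    also have "\<dots> = word_chain d (length C) G ! i" using len i by (simp add: word_chain_nth m_def)
    finally show "fs ! i = word_chain d (length C) G ! i" .
  qed (simp add: fs)
  moreover have "G \<in> tree_T t n" "length G = sum_list d"
    using words_along_maxchain(3)[OF C fs zs, of "m - 1"] len[of "m - 1"] m psum_all[of d "m - 1"] d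
    by (simp_all add: G_def m_def)
  ultimately show ?thesis using ys by (auto simp: words_def tree_T_def lift_chain_def)
qed

lemma lift_in_block:
  assumes C: "maxchain_list A le C" and d: "length d = length C - 1" "set d \<subseteq> {0, 1}"
    and g: "g \<in> words t (sum_list d)"
  shows "lift_chain C d g \<in> block A le t n C d"
proof -
  define fs where "fs = word_chain d (length C) g"
  have g_len: "length g = sum_list d" using g by (simp add: words_def)
  have "int (length (fs ! i)) - int (length (fs ! (i - 1))) = int (d ! (i - 1))"
    if "i \<in> {1..<length C}" for i
  proof -
    have "i - 1 < length C" "i < length C" using that by auto
    then have "length (fs ! i) = psum d i" "length (fs ! (i - 1)) = psum d (i - 1)"
      using g_len by (simp_all only: fs_def length_word_chain_nth)
    moreover have "i - 1 < length d" "Suc (i - 1) = i" using that d(1) by auto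
    ultimately show ?thesis using psum_Suc[of "i - 1" d] by simp
  qed
  moreover have "maxchain_list PT lePT (zip C fs)"
    using lift_maxchain[OF C d(2)] g by (simp add: fs_def words_def)
  ultimately show ?thesis
    unfolding block_iff by (intro exI[of _ fs]) (simp add: fs_def lift_chain_def)
qed

lemma block_eq_image:
  assumes C: "maxchain_list A le C" and d: "length d = length C - 1" "set d \<subseteq> {0, 1}"
  shows "block A le t n C d = lift_chain C d ` words t (sum_list d)"
  using block_member_is_lift[OF C d(1)] lift_in_block[OF C d] by blast

text \<open>Hence |[C,d]| = t^(d_1 + ... + d_m): the lifting is injective, since the top word of the
  lift of g is g itself.\<close>
lemma card_block:
  assumes C: "maxchain_list A le C" and d: "length d = length C - 1" "set d \<subseteq> {0, 1}"
  shows "card (block A le t n C d) = t ^ sum_list d"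
proof -
  have "inj_on (lift_chain C d) (words t (sum_list d))"
  proof (rule inj_onI)
    fix g h assume g: "g \<in> words t (sum_list d)" and h: "h \<in> words t (sum_list d)"
      and "lift_chain C d g = lift_chain C d h"
    then have "zip C (word_chain d (length C) g) = zip C (word_chain d (length C) h)"
      by (simp add: lift_chain_def map_Elem_eq_iff)
    then have "map snd (zip C (word_chain d (length C) g)) = map snd (zip C (word_chain d (length C) h))"
      by (rule arg_cong)
    then have "word_chain d (length C) g = word_chain d (length C) h" by simp
    moreover have "length C - 1 < length C" using maxchain_nonempty[OF C] by simp
    ultimately have "take (psum d (length C - 1)) g = take (psum d (length C - 1)) h"
      by (metis word_chain_nth)
    then show "g = h" using g h psum_all[of d "length C - 1"] d(1) by (simp add: words_def)
  qed
  then have "card (block A le t n C d) = card (words t (sum_list d))"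
    by (simp add: block_eq_image[OF assms] card_image)
  also have "\<dots> = t ^ sum_list d" using card_lists_length_eq[of "{1..t}"] by (simp add: words_def)
  finally show ?thesis .
qed

text \<open>Every maximal chain of the hat of P * T_{t,n} lies in some block [C,d] with d a 0/1
  sequence: C is its projection to P and d records where the word grows.\<close>
lemma block_cover:
  assumes ys: "maxchain_list (hat_carrier PT) (hat_le lePT) ys"
  shows "\<exists>C d. maxchain_list A le C \<and> length d = length C - 1 \<and> set d \<subseteq> {0, 1} \<and>
    ys \<in> block A le t n C d"
proof -
  obtain zs where ys_eq: "ys = Bot # map Elem zs @ [Top]" and zs: "maxchain_list PT lePT zs"
    using ys maxchain_list_hat[of PT lePT, OF PT_refl] by blast
  define C where "C = map fst zs"
  define fs where "fs = map snd zs"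
  have C: "maxchain_list A le C" using maxchain_PT_fst[OF zs] by (simp add: C_def)
  have fs: "length fs = length C" and zip: "zip C fs = zs"
    by (simp_all add: C_def fs_def zip_map_fst_snd)
  define d where "d = map (\<lambda>i. length (fs ! Suc i) - length (fs ! i)) [0..<length C - 1]"
  have d_len: "length d = length C - 1" by (simp add: d_def)
  have step: "length (fs ! i) \<le> length (fs ! Suc i)" "length (fs ! Suc i) \<le> length (fs ! i) + 1"
    if "Suc i < length C" for i
    using words_along_maxchain[OF C fs, of i "Suc i"] zs zip that prefix_length_le by auto
  have "set d \<subseteq> {0, 1}"
  proof
    fix x assume "x \<in> set d"
    then obtain i where "i < length C - 1" "x = length (fs ! Suc i) - length (fs ! i)"
      by (auto simp: d_def)
    moreover have "Suc i < length C" using \<open>i < length C - 1\<close> by simp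
    ultimately show "x \<in> {0, 1}" using step[of i] by auto
  qed
  moreover have "ys \<in> block A le t n C d"
    unfolding block_iff
  proof (intro exI conjI ballI)
    fix i assume "i \<in> {1..<length C}"
    then show "int (length (fs ! i)) - int (length (fs ! (i - 1))) = int (d ! (i - 1))"
      using step[of "i - 1"] by (auto simp: d_def)
  qed (use fs ys_eq zip zs in auto)
  ultimately show ?thesis using C d_len by blast
qed

lemma maxchains_eq_union_blocks:
  "(\<Union>C\<in>{C. maxchain_list A le C}.
      \<Union>d\<in>{d. length d = length C - 1 \<and> set d \<subseteq> {0, 1}}. block A le t n C d)
    = {ys. maxchain_list (hat_carrier PT) (hat_le lePT) ys}"
proof (intro equalityI subsetI)
  fix ys assume "ys \<in> (\<Union>C\<in>{C. maxchain_list A le C}.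
          \<Union>d\<in>{d. length d = length C - 1 \<and> set d \<subseteq> {0, 1}}. block A le t n C d)"
  then obtain C d where "ys \<in> block A le t n C d" by blast
  then show "ys \<in> {ys. maxchain_list (hat_carrier PT) (hat_le lePT) ys}" by (simp add: block_def)
next
  fix ys assume "ys \<in> {ys. maxchain_list (hat_carrier PT) (hat_le lePT) ys}"
  then obtain C d where "maxchain_list A le C" "length d = length C - 1" "set d \<subseteq> {0, 1}"
    "ys \<in> block A le t n C d"
    using block_cover by blast
  then show "ys \<in> (\<Union>C\<in>{C. maxchain_list A le C}.
          \<Union>d\<in>{d. length d = length C - 1 \<and> set d \<subseteq> {0, 1}}. block A le t n C d)"
    by blast
qed

end

theorem proposition3p1:
  fixes A :: "'a set" and le :: "'a \<Rightarrow> 'a \<Rightarrow> bool" and n t :: nat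
  assumes "finite A" and "is_poset A le" and "semipure A le" and "poset_length A le n"
    and "t \<ge> 1"
  shows "((\<Union>C\<in>{C. maxchain_list A le C}.
            \<Union>d\<in>{d. length d = length C - 1 \<and> set d \<subseteq> {0, 1}}. block A le t n C d)
         = {ys. maxchain_list (hat_carrier (rees_carrier A le (tree_T t n) prefix))
                              (hat_le (rees_le A le (tree_T t n) prefix)) ys})
    \<and> (\<forall>C C' d d'. maxchain_list A le C \<and> maxchain_list A le C' \<and>
            length d = length C - 1 \<and> set d \<subseteq> {0, 1} \<and>
            length d' = length C' - 1 \<and> set d' \<subseteq> {0, 1} \<and> (C, d) \<noteq> (C', d') \<longrightarrow>
            block A le t n C d \<inter> block A le t n C' d' = {})
    \<and> (\<forall>C d. maxchain_list A le C \<and> length d = length C - 1 \<and> set d \<subseteq> {0, 1} \<longrightarrow>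
            card (block A le t n C d) = t ^ sum_list d)"
proof -
  interpret rees_tree A le n t
    using assms by unfold_locales
  show ?thesis
  proof (intro conjI allI impI)
    fix C C' :: "'a list" and d d' :: "nat list"
    assume "maxchain_list A le C \<and> maxchain_list A le C' \<and>
      length d = length C - 1 \<and> set d \<subseteq> {0, 1} \<and>
      length d' = length C' - 1 \<and> set d' \<subseteq> {0, 1} \<and> (C, d) \<noteq> (C', d')"
    then show "block A le t n C d \<inter> block A le t n C' d' = {}"
      using block_determines[of _ A le t n C d C' d'] by blast
  next
    fix C :: "'a list" and d :: "nat list"
    assume "maxchain_list A le C \<and> length d = length C - 1 \<and> set d \<subseteq> {0, 1}"
    then show "card (block A le t n C d) = t ^ sum_list d" using card_block by blast
  qed (rule maxchains_eq_union_blocks)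
qed

end
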